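(* Let $A$ be any set and $C\subseteq A\times A$ (equivalently a map $C:A\times A\to\{0,1\}$). Then the diagonal set $z=\{b\in A\mid (b,b)\in C\}$ can be written as a (possibly infinite) union of (possibly infinite) intersections of subsets of $A$ that are rows $\{b\mid (a,b)\in C\}$ or columns $\{b\mid (b,a)\in C\}$ $(a\in A)$ of $C$. *)

theory Defs
  imports Main
begin

definition row_of :: "('a \<times> 'a) set \<Rightarrow> 'a \<Rightarrow> 'a set" where
  "row_of C a = {b. (a, b) \<in> C}"

definition col_of :: "('a \<times> 'a) set \<Rightarrow> 'a \<Rightarrow> 'a set" where
  "col_of C a = {b. (b, a) \<in> C}"

end

theory Submission
  imports Defs
begin

text \<open>For a diagonal point \<open>b\<close>, intersect the row of \<open>b\<close> with the columns of all points
  \<open>c\<close> of that row with \<open>(c, c) \<notin> C\<close>. This contains \<open>b\<close>, and it misses every such \<open>c\<close>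
  because \<open>c \<notin> col_of C c\<close>; so it lies inside the diagonal set, which is therefore the
  union of these intersections.\<close>

definition diag_cover :: "('a \<times> 'a) set \<Rightarrow> 'a \<Rightarrow> 'a set set" where
  "diag_cover C b = insert (row_of C b) {col_of C c | c. (b, c) \<in> C \<and> (c, c) \<notin> C}"

lemma mem_Inter_diag_cover:
  assumes "(b, b) \<in> C"
  shows "b \<in> \<Inter>(diag_cover C b)"
  using assms by (auto simp: diag_cover_def row_of_def col_of_def)

lemma Inter_diag_cover_subset: "\<Inter>(diag_cover C b) \<subseteq> {x \<in> row_of C b. (x, x) \<in> C}"
proof
  fix x assume x: "x \<in> \<Inter>(diag_cover C b)"
  then have "(b, x) \<in> C"
    by (auto simp: diag_cover_def row_of_def)
  moreover have "(x, x) \<in> C"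
  proof (rule ccontr)
    assume "(x, x) \<notin> C"
    with \<open>(b, x) \<in> C\<close> have "col_of C x \<in> diag_cover C b"
      by (auto simp: diag_cover_def)
    with x \<open>(x, x) \<notin> C\<close> show False
      by (auto simp: col_of_def)
  qed
  ultimately show "x \<in> {x \<in> row_of C b. (x, x) \<in> C}"
    by (simp add: row_of_def)
qed

theorem lemma2p4:
  fixes A :: "'a set" and C :: "('a \<times> 'a) set"
  assumes "C \<subseteq> A \<times> A"
  shows "\<exists>F :: 'a set set set.
           (\<forall>S\<in>F. \<forall>X\<in>S. \<exists>a\<in>A. X = row_of C a \<or> X = col_of C a) \<and>
           {b \<in> A. (b, b) \<in> C} = (\<Union>S\<in>F. \<Inter>S)"
proof (intro exI conjI)
  let ?F = "diag_cover C ` {b \<in> A. (b, b) \<in> C}"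
  show "\<forall>S\<in>?F. \<forall>X\<in>S. \<exists>a\<in>A. X = row_of C a \<or> X = col_of C a"
  proof (intro ballI)
    fix S X assume "S \<in> ?F" "X \<in> S"
    then obtain b where b: "b \<in> A" and X: "X \<in> diag_cover C b"
      by auto
    from X consider "X = row_of C b" | c where "(b, c) \<in> C" "X = col_of C c"
      unfolding diag_cover_def by auto
    then show "\<exists>a\<in>A. X = row_of C a \<or> X = col_of C a"
    proof cases
      case 1
      with b show ?thesis by auto
    next
      case (2 c)
      with assms have "c \<in> A" by auto
      with 2 show ?thesis by auto
    qed
  qed
  show "{b \<in> A. (b, b) \<in> C} = (\<Union>S\<in>?F. \<Inter>S)"
  proof (intro equalityI subsetI)
    fix b assume b: "b \<in> {b \<in> A. (b, b) \<in> C}"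
    then have "b \<in> \<Inter>(diag_cover C b)"
      by (intro mem_Inter_diag_cover) simp
    with b show "b \<in> (\<Union>S\<in>?F. \<Inter>S)"
      by blast
  next
    fix x assume "x \<in> (\<Union>S\<in>?F. \<Inter>S)"
    then obtain b where "x \<in> \<Inter>(diag_cover C b)"
      by auto
    then have "x \<in> {x \<in> row_of C b. (x, x) \<in> C}"
      by (rule subsetD[OF Inter_diag_cover_subset])
    then have "(b, x) \<in> C" "(x, x) \<in> C"
      by (simp_all add: row_of_def)
    with assms show "x \<in> {b \<in> A. (b, b) \<in> C}"
      by auto
  qed
qed

end
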